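(* Let $r,c\ge3$, $n=rc$, let $\mathcal{M}\subseteq\{1,\dots,n\}$ be a set of sampled pixels (vectorized indexing), $A=\mathbf{I}_{\mathcal{M}}$, $\varepsilon>0$, and $y\in\mathbb{R}^{|\mathcal{M}|}$ (indexed by $\mathcal{M}$). Let $Z\in\mathbb{R}^{r\times c}$, $z=\mathrm{vec}(Z)$, be feasible for $\min_{z'}\|\Delta z'\|_1$ subject to $\|Az'-y\|_\infty\le\varepsilon$. With $\mathcal{A}=\{i\in\mathcal{M}:|y_i-z_i|=\varepsilon\}$, $\mathcal{A}_\uparrow=\{i\in\mathcal{M}: y_i-z_i=\varepsilon\}$, $\mathcal{A}_\downarrow=\{i\in\mathcal{M}: y_i-z_i=-\varepsilon\}$ and $\bar{\mathcal{A}}=\mathcal{M}\setminus\mathcal{A}$, $Z$ is a minimizer if and only if there exists $u\in\mathbb{R}^{2(n-r-c)}$ such that $$(\Delta^{\mathsf{T}})_{\overline{\mathcal{M}}\cup\bar{\mathcal{A}}}\,u=\mathbf{0},\quad u_{\mathcal{I}}=\mathrm{sign}(\Delta z)_{\mathcal{I}},\quad \|u\|_\infty\le1,\quad (\Delta^{\mathsf{T}})_{\mathcal{A}_\uparrow}u\ge\mathbf{0},\quad (\Delta^{\mathsf{T}})_{\mathcal{A}_\downarrow}u\le\mathbf{0},$$ where $\mathcal{I}$ is the set of indices of nonzero entries of $\Delta z$ and $\overline{\mathcal{M}}=\{1,\dots,n\}\setminus\mathcal{M}$.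
   Context: $\mathrm{vec}$ stacks columns (pixel $(i,j)\mapsto$ index $(j-1)r+i$). For $p\ge3$, $D^{(p)}\in\mathbb{R}^{(p-2)\times p}$ is the second-order difference operator with $k$-th row having entries $1,-2,1$ in columns $k,k+1,k+2$; $D_V=D^{(r)}$, $D_H=D^{(c)}$, $\Delta=\begin{bmatrix}\mathbf{I}_c\otimes D_V\\ D_H\otimes\mathbf{I}_r\end{bmatrix}\in\mathbb{R}^{2(n-r-c)\times n}$. $\mathbf{I}_{\mathcal{M}}$ consists of the rows of the identity indexed by $\mathcal{M}$; $M_{\mathcal{S}}$ denotes rows of $M$ indexed by $\mathcal{S}$, $v_{\mathcal{S}}$ the subvector; $\mathrm{sign}$ is entrywise with $\mathrm{sign}(0)=0$; inequalities are entrywise. *)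

theory Defs
  imports Complex_Main
begin

(* Conventions: all indices are 0-based. Vectors of length p are functions nat => real
   of which only entries 0..p-1 are used; matrices are functions nat => nat => real
   (row, column). *)

definition idm :: "nat \<Rightarrow> nat \<Rightarrow> real" where
  "idm i j = (if i = j then 1 else 0)"

definition Dop :: "nat \<Rightarrow> nat \<Rightarrow> nat \<Rightarrow> real" where
  "Dop p k j = (if k < p - 2 \<and> j < p then
                  (if j = k then 1 else if j = k + 1 then -2 else if j = k + 2 then 1 else 0)
                else 0)"

definition kron :: "(nat \<Rightarrow> nat \<Rightarrow> real) \<Rightarrow> nat \<Rightarrow> nat \<Rightarrow> (nat \<Rightarrow> nat \<Rightarrow> real)
                    \<Rightarrow> nat \<Rightarrow> nat \<Rightarrow> real" where
  "kron A m2 n2 B p q = A (p div m2) (q div n2) * B (p mod m2) (q mod n2)"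

text \<open>Delta = [I_c (x) D_V ; D_H (x) I_r], of size 2(n-r-c) x n with n = r c.\<close>
definition Delta :: "nat \<Rightarrow> nat \<Rightarrow> nat \<Rightarrow> nat \<Rightarrow> real" where
  "Delta r c p q =
     (if p < c * (r - 2) then kron idm (r - 2) r (Dop r) p q
      else kron (Dop c) r r idm (p - c * (r - 2)) q)"

definition nrows :: "nat \<Rightarrow> nat \<Rightarrow> nat" where
  "nrows r c = 2 * (r * c - r - c)"

definition vec :: "nat \<Rightarrow> (nat \<Rightarrow> nat \<Rightarrow> real) \<Rightarrow> nat \<Rightarrow> real" where
  "vec r Z k = Z (k mod r) (k div r)"

definition Dz :: "nat \<Rightarrow> nat \<Rightarrow> (nat \<Rightarrow> real) \<Rightarrow> nat \<Rightarrow> real" where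
  "Dz r c z p = (\<Sum>q<r * c. Delta r c p q * z q)"

definition DTu :: "nat \<Rightarrow> nat \<Rightarrow> (nat \<Rightarrow> real) \<Rightarrow> nat \<Rightarrow> real" where
  "DTu r c u q = (\<Sum>p<nrows r c. Delta r c p q * u p)"

definition TV1 :: "nat \<Rightarrow> nat \<Rightarrow> (nat \<Rightarrow> real) \<Rightarrow> real" where
  "TV1 r c z = (\<Sum>p<nrows r c. \<bar>Dz r c z p\<bar>)"

text \<open>Feasibility: || A z - y ||_inf <= eps with A = I_M, y indexed by M.\<close>
definition feasible :: "nat set \<Rightarrow> (nat \<Rightarrow> real) \<Rightarrow> real \<Rightarrow> (nat \<Rightarrow> real) \<Rightarrow> bool" where
  "feasible M y eps z = (\<forall>i\<in>M. \<bar>z i - y i\<bar> \<le> eps)"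

definition is_minimizer :: "nat \<Rightarrow> nat \<Rightarrow> nat set \<Rightarrow> (nat \<Rightarrow> real) \<Rightarrow> real \<Rightarrow> (nat \<Rightarrow> real) \<Rightarrow> bool" where
  "is_minimizer r c M y eps z =
     (feasible M y eps z \<and> (\<forall>z'. feasible M y eps z' \<longrightarrow> TV1 r c z \<le> TV1 r c z'))"

end

theory Submission
  imports Defs "HOL-Analysis.Function_Topology"
begin

text \<open>Sufficiency is weak duality: for a certificate u and any feasible z',
  ||D z'||_1 \<ge> <u, D z'> = <u, D z> + <D^T u, z' - z> \<ge> ||D z||_1, the last inner product being
  nonnegative because z' - z lies in the tangent cone of the box at z while D^T u lies in its dual
  cone. For necessity, minimise over the compact convex set U of subgradients of the l1 norm at D z
  the squared distance from D^T u to that dual cone. If the minimum is positive, the negated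
  residual d at a minimiser is a feasible direction with <D^T u, d> < 0 for every u in U (first-order
  optimality of the minimiser). The one-sided derivative of ||D \<cdot>||_1 at z along d is attained
  at some u in U, so a small step from z along d stays feasible and decreases the objective.\<close>

definition mat_apply :: "(nat \<Rightarrow> nat \<Rightarrow> real) \<Rightarrow> nat \<Rightarrow> (nat \<Rightarrow> real) \<Rightarrow> nat \<Rightarrow> real" where
  "mat_apply D n z p = (\<Sum>q<n. D p q * z q)"

definition mat_tapply :: "(nat \<Rightarrow> nat \<Rightarrow> real) \<Rightarrow> nat \<Rightarrow> (nat \<Rightarrow> real) \<Rightarrow> nat \<Rightarrow> real" where
  "mat_tapply D m u q = (\<Sum>p<m. D p q * u p)"

lemma mat_adjoint:
  "(\<Sum>q<n. d q * mat_tapply D m u q) = (\<Sum>p<m. u p * mat_apply D n d p)"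
  unfolding mat_apply_def mat_tapply_def
  by (simp add: sum_distrib_left sum.swap[of _ "{..<n}"] mult_ac)

lemma mat_apply_add_scaled:
  "mat_apply D n (\<lambda>q. z q + t * d q) p = mat_apply D n z p + t * mat_apply D n d p"
  unfolding mat_apply_def by (simp add: algebra_simps sum.distrib sum_distrib_left)

lemma mat_apply_diff:
  "mat_apply D n (\<lambda>q. a q - b q) p = mat_apply D n a p - mat_apply D n b p"
  unfolding mat_apply_def by (simp add: algebra_simps sum_subtractf)

lemma mat_tapply_segment:
  "mat_tapply D m (\<lambda>p. a p + t * (b p - a p)) q
     = mat_tapply D m a q + t * (mat_tapply D m b q - mat_tapply D m a q)"
  unfolding mat_tapply_def
  by (simp add: algebra_simps sum.distrib sum_distrib_left sum_subtractf)

lemma continuous_on_mat_tapply: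
  "continuous_on (U :: (nat \<Rightarrow> real) set) (\<lambda>u. mat_tapply D m u q)"
  unfolding mat_tapply_def
  by (intro continuous_intros continuous_on_subset[OF continuous_on_product_coordinates]) simp

text \<open>Coordinatewise constraint cones \<open>[0,\<infinity>)\<close>, \<open>(-\<infinity>,0]\<close> or \<open>{0}\<close>; the first
  flag takes precedence when both hold.\<close>
definition sign_cone :: "bool \<Rightarrow> bool \<Rightarrow> real set" where
  "sign_cone up dn = (if up then {0..} else if dn then {..0} else {0})"

definition sign_cone_dual :: "bool \<Rightarrow> bool \<Rightarrow> real set" where
  "sign_cone_dual up dn = (if up then {0..} else if dn then {..0} else UNIV)"

text \<open>The difference between \<open>x\<close> and its projection onto \<open>sign_cone up dn\<close>.\<close>
definition sign_cone_residual :: "bool \<Rightarrow> bool \<Rightarrow> real \<Rightarrow> real" where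
  "sign_cone_residual up dn x = (if up then min x 0 else if dn then max x 0 else x)"

lemma sign_cone_dual_mult_nonneg:
  "v \<in> sign_cone up dn \<Longrightarrow> d \<in> sign_cone_dual up dn \<Longrightarrow> 0 \<le> d * v"
  by (auto simp: sign_cone_def sign_cone_dual_def split: if_splits intro: mult_nonpos_nonpos)

lemma sign_cone_residual_eq_0_iff:
  "sign_cone_residual up dn x = 0 \<longleftrightarrow> x \<in> sign_cone up dn"
  by (auto simp: sign_cone_residual_def sign_cone_def min_def max_def)

lemma uminus_sign_cone_residual_mem_dual:
  "- sign_cone_residual up dn x \<in> sign_cone_dual up dn"
  by (auto simp: sign_cone_residual_def sign_cone_dual_def)

lemma sign_cone_residual_mult_self:
  "sign_cone_residual up dn x * x = (sign_cone_residual up dn x)\<^sup>2"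
  by (auto simp: sign_cone_residual_def power2_eq_square min_def max_def)

lemma diff_sign_cone_residual_mem:
  "x - sign_cone_residual up dn x \<in> sign_cone up dn"
  by (auto simp: sign_cone_residual_def sign_cone_def min_def max_def)

lemma sign_cone_residual_square_le:
  assumes "c \<in> sign_cone up dn"
  shows "(sign_cone_residual up dn x)\<^sup>2 \<le> (x - c)\<^sup>2"
proof -
  have "\<bar>sign_cone_residual up dn x\<bar> \<le> \<bar>x - c\<bar>"
    using assms by (auto simp: sign_cone_residual_def sign_cone_def)
  then show ?thesis by (simp add: abs_le_square_iff)
qed

lemma continuous_sign_cone_residual: "continuous_on UNIV (sign_cone_residual up dn)"
  unfolding sign_cone_residual_def by (cases up; cases dn) (simp_all add: continuous_on_min continuous_on_max)

lemma eventually_abs_scaled_less_at_right: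
  fixes b e :: real
  assumes "0 < b"
  shows "eventually (\<lambda>t. \<bar>t * e\<bar> < b) (at_right 0)"
proof (rule order_tendstoD)
  show "((\<lambda>t. \<bar>t * e\<bar>) \<longlongrightarrow> \<bar>0 * e\<bar>) (at_right 0)"
    by (intro tendsto_intros)
qed (use assms in simp)

lemma eventually_abs_add_scaled_at_right:
  fixes a e :: real
  shows "eventually (\<lambda>t. \<bar>a + t * e\<bar> = \<bar>a\<bar> + t * (if a = 0 then \<bar>e\<bar> else sgn a * e)) (at_right 0)"
proof (cases "a = 0")
  case True
  show ?thesis
    using eventually_at_right_less[of 0] by eventually_elim (simp add: True abs_mult)
next
  case False
  then have "eventually (\<lambda>t. \<bar>t * e\<bar> < \<bar>a\<bar>) (at_right 0)"
    by (intro eventually_abs_scaled_less_at_right) simp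
  then show ?thesis
    by eventually_elim (use False in \<open>auto simp: sgn_if abs_if algebra_simps\<close>)
qed

lemma nonneg_if_eventually_nonneg_at_right:
  fixes a b :: real
  assumes "eventually (\<lambda>t. 0 \<le> a + t * b) (at_right 0)"
  shows "0 \<le> a"
proof (rule tendsto_le[OF trivial_limit_at_right_real _ tendsto_const assms])
  show "((\<lambda>t. a + t * b) \<longlongrightarrow> a) (at_right 0)"
    by (auto intro!: tendsto_eq_intros)
qed

definition sq_dist_sign_cones ::
    "nat \<Rightarrow> (nat \<Rightarrow> bool) \<Rightarrow> (nat \<Rightarrow> bool) \<Rightarrow> (nat \<Rightarrow> real) \<Rightarrow> real" where
  "sq_dist_sign_cones n up dn v = (\<Sum>i<n. (sign_cone_residual (up i) (dn i) (v i))\<^sup>2)"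

lemma residual_variational_inequality:
  fixes U :: "(nat \<Rightarrow> real) set" and D :: "nat \<Rightarrow> nat \<Rightarrow> real" and m n :: nat
    and up dn :: "nat \<Rightarrow> bool"
  assumes segment: "\<And>u v t. u \<in> U \<Longrightarrow> v \<in> U \<Longrightarrow> 0 \<le> t \<Longrightarrow> t \<le> 1 \<Longrightarrow>
                      (\<lambda>p. u p + t * (v p - u p)) \<in> U"
    and "u0 \<in> U" "u \<in> U"
    and min: "\<And>w. w \<in> U \<Longrightarrow> sq_dist_sign_cones n up dn (mat_tapply D m u0)
                             \<le> sq_dist_sign_cones n up dn (mat_tapply D m w)"
  shows "0 \<le> (\<Sum>i<n. sign_cone_residual (up i) (dn i) (mat_tapply D m u0 i)
                        * (mat_tapply D m u i - mat_tapply D m u0 i))"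
    (is "0 \<le> (\<Sum>i<n. ?\<rho> i * ?\<delta> i)")
proof -
  define h where "h w = sq_dist_sign_cones n up dn (mat_tapply D m w)" for w
  let ?a = "\<Sum>i<n. ?\<rho> i * ?\<delta> i" and ?B = "\<Sum>i<n. (?\<delta> i)\<^sup>2"
  have small_step: "0 \<le> 2 * ?a + t * ?B" if t: "0 < t" "t \<le> 1" for t
  proof -
    define w where "w p = u0 p + t * (u p - u0 p)" for p
    have "w \<in> U"
      unfolding w_def[abs_def] using segment[OF \<open>u0 \<in> U\<close> \<open>u \<in> U\<close>] t by simp
    have Lw: "mat_tapply D m w i = mat_tapply D m u0 i + t * ?\<delta> i" for i
      unfolding w_def[abs_def] by (rule mat_tapply_segment)
    from \<open>w \<in> U\<close> have "h u0 \<le> h w" unfolding h_def by (rule min)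
    also have "h w \<le> (\<Sum>i<n. (?\<rho> i + t * ?\<delta> i)\<^sup>2)"
      unfolding h_def sq_dist_sign_cones_def
    proof (rule sum_mono)
      fix i
      have "(sign_cone_residual (up i) (dn i) (mat_tapply D m w i))\<^sup>2
              \<le> (mat_tapply D m w i - (mat_tapply D m u0 i - ?\<rho> i))\<^sup>2"
        by (rule sign_cone_residual_square_le[OF diff_sign_cone_residual_mem])
      then show "(sign_cone_residual (up i) (dn i) (mat_tapply D m w i))\<^sup>2 \<le> (?\<rho> i + t * ?\<delta> i)\<^sup>2"
        by (simp add: Lw algebra_simps)
    qed
    also have "\<dots> = (\<Sum>i<n. (?\<rho> i)\<^sup>2 + t * (2 * (?\<rho> i * ?\<delta> i)) + t * (t * (?\<delta> i)\<^sup>2))"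
      by (simp add: power2_eq_square algebra_simps)
    also have "\<dots> = h u0 + t * (2 * ?a + t * ?B)"
      unfolding h_def sq_dist_sign_cones_def
      by (simp add: sum.distrib sum_distrib_left distrib_left)
    finally show ?thesis
      using t by (simp add: zero_le_mult_iff)
  qed
  have "eventually (\<lambda>t. 0 \<le> 2 * ?a + t * ?B) (at_right 0)"
    using eventually_at_right_real[OF zero_less_one] by eventually_elim (simp add: small_step)
  then have "0 \<le> 2 * ?a"
    by (rule nonneg_if_eventually_nonneg_at_right)
  then show ?thesis by simp
qed

lemma separating_direction:
  fixes U :: "(nat \<Rightarrow> real) set"
  assumes "compact U" "U \<noteq> {}"
    and segment: "\<And>u v t. u \<in> U \<Longrightarrow> v \<in> U \<Longrightarrow> 0 \<le> t \<Longrightarrow> t \<le> 1 \<Longrightarrow>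
                    (\<lambda>p. u p + t * (v p - u p)) \<in> U"
    and outside: "\<And>u. u \<in> U \<Longrightarrow> \<exists>i<n. mat_tapply D m u i \<notin> sign_cone (up i) (dn i)"
  shows "\<exists>d. (\<forall>i. d i \<in> sign_cone_dual (up i) (dn i)) \<and>
             (\<forall>u\<in>U. (\<Sum>i<n. d i * mat_tapply D m u i) < 0)"
proof -
  define h where "h w = sq_dist_sign_cones n up dn (mat_tapply D m w)" for w
  have "continuous_on U h"
    unfolding h_def sq_dist_sign_cones_def
    by (intro continuous_intros continuous_on_compose2[OF continuous_sign_cone_residual
          continuous_on_mat_tapply]) auto
  then obtain u0 where "u0 \<in> U" and min: "\<And>w. w \<in> U \<Longrightarrow> h u0 \<le> h w"
    using continuous_attains_inf[OF \<open>compact U\<close> \<open>U \<noteq> {}\<close>] by blast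
  define d where "d i = - sign_cone_residual (up i) (dn i) (mat_tapply D m u0 i)" for i
  have "h u0 \<noteq> 0"
  proof
    assume "h u0 = 0"
    then have "\<forall>i<n. mat_tapply D m u0 i \<in> sign_cone (up i) (dn i)"
      by (simp add: h_def sq_dist_sign_cones_def sum_nonneg_eq_0_iff sign_cone_residual_eq_0_iff)
    with outside[OF \<open>u0 \<in> U\<close>] show False by blast
  qed
  then have "0 < h u0"
    by (simp add: h_def sq_dist_sign_cones_def less_le sum_nonneg)
  have "(\<Sum>i<n. d i * mat_tapply D m u0 i) = - h u0"
    by (simp add: d_def h_def sq_dist_sign_cones_def sign_cone_residual_mult_self sum_negf)
  moreover have "(\<Sum>i<n. d i * (mat_tapply D m u i - mat_tapply D m u0 i)) \<le> 0" if "u \<in> U" for u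
    using residual_variational_inequality[OF segment \<open>u0 \<in> U\<close> that min[unfolded h_def]]
    unfolding d_def mult_minus_left sum_negf by linarith
  ultimately have "(\<Sum>i<n. d i * mat_tapply D m u i) < 0" if "u \<in> U" for u
    using \<open>0 < h u0\<close> that by (fastforce simp: algebra_simps sum_subtractf)
  moreover have "d i \<in> sign_cone_dual (up i) (dn i)" for i
    by (simp add: d_def uminus_sign_cone_residual_mem_dual)
  ultimately show ?thesis by blast
qed

definition tangent_cone :: "nat set \<Rightarrow> (nat \<Rightarrow> real) \<Rightarrow> real \<Rightarrow> (nat \<Rightarrow> real) \<Rightarrow> nat \<Rightarrow> real set" where
  "tangent_cone M y eps z i =
     sign_cone_dual (i \<in> M \<and> y i - z i = eps) (i \<in> M \<and> y i - z i = - eps)"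

definition dual_tangent_cone ::
    "nat set \<Rightarrow> (nat \<Rightarrow> real) \<Rightarrow> real \<Rightarrow> (nat \<Rightarrow> real) \<Rightarrow> nat \<Rightarrow> real set" where
  "dual_tangent_cone M y eps z i =
     sign_cone (i \<in> M \<and> y i - z i = eps) (i \<in> M \<and> y i - z i = - eps)"

lemma feasible_diff_mem_tangent_cone:
  assumes "feasible M y eps z" "feasible M y eps z'"
  shows "z' i - z i \<in> tangent_cone M y eps z i"
  using assms by (force simp: tangent_cone_def sign_cone_dual_def feasible_def abs_le_iff)

lemma eventually_feasible_along_tangent:
  assumes "finite M" "0 < eps" "feasible M y eps z"
    and tangent: "\<And>i. d i \<in> tangent_cone M y eps z i"
  shows "eventually (\<lambda>t. feasible M y eps (\<lambda>i. z i + t * d i)) (at_right 0)"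
  unfolding feasible_def
proof (rule eventually_ball_finite[OF \<open>finite M\<close>], intro ballI)
  fix i assume "i \<in> M"
  then have zi: "\<bar>z i - y i\<bar> \<le> eps"
    using \<open>feasible M y eps z\<close> by (simp add: feasible_def)
  consider "y i - z i = eps" "0 \<le> d i" | "y i - z i = - eps" "d i \<le> 0" | "\<bar>z i - y i\<bar> < eps"
    using tangent[of i] zi \<open>i \<in> M\<close> \<open>0 < eps\<close>
    by (auto simp: tangent_cone_def sign_cone_dual_def split: if_splits)
  moreover have small: "eventually (\<lambda>t. 0 < t \<and> \<bar>t * d i\<bar> < 2 * eps) (at_right 0)"
    by (intro eventually_conj eventually_at_right_less eventually_abs_scaled_less_at_right)
      (use \<open>0 < eps\<close> in simp)
  ultimately show "eventually (\<lambda>t. \<bar>z i + t * d i - y i\<bar> \<le> eps) (at_right 0)"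
  proof cases
    case 1
    from small show ?thesis
      by eventually_elim (use 1 in \<open>auto simp: abs_le_iff abs_mult\<close>)
  next
    case 2
    from small show ?thesis
    proof eventually_elim
      case (elim t)
      with 2 have "t * d i \<le> 0" by (simp add: mult_nonneg_nonpos)
      with 2 elim show ?case by (auto simp: abs_le_iff)
    qed
  next
    case 3
    then have "eventually (\<lambda>t. \<bar>t * d i\<bar> < eps - \<bar>z i - y i\<bar>) (at_right 0)"
      by (intro eventually_abs_scaled_less_at_right) simp
    then show ?thesis
      by eventually_elim linarith
  qed
qed

definition l1_objective :: "(nat \<Rightarrow> nat \<Rightarrow> real) \<Rightarrow> nat \<Rightarrow> nat \<Rightarrow> (nat \<Rightarrow> real) \<Rightarrow> real" where
  "l1_objective D m n z = (\<Sum>p<m. \<bar>mat_apply D n z p\<bar>)"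

definition box_l1_minimizer ::
    "(nat \<Rightarrow> nat \<Rightarrow> real) \<Rightarrow> nat \<Rightarrow> nat \<Rightarrow> nat set \<Rightarrow> (nat \<Rightarrow> real) \<Rightarrow> real \<Rightarrow> (nat \<Rightarrow> real) \<Rightarrow> bool"
  where
  "box_l1_minimizer D m n M y eps z \<longleftrightarrow>
     feasible M y eps z \<and> (\<forall>z'. feasible M y eps z' \<longrightarrow> l1_objective D m n z \<le> l1_objective D m n z')"

definition dual_certificate ::
    "(nat \<Rightarrow> nat \<Rightarrow> real) \<Rightarrow> nat \<Rightarrow> nat \<Rightarrow> nat set \<Rightarrow> (nat \<Rightarrow> real) \<Rightarrow> real \<Rightarrow> (nat \<Rightarrow> real)
      \<Rightarrow> (nat \<Rightarrow> real) \<Rightarrow> bool"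
  where
  "dual_certificate D m n M y eps z u \<longleftrightarrow>
     (\<forall>p<m. \<bar>u p\<bar> \<le> 1 \<and> (mat_apply D n z p \<noteq> 0 \<longrightarrow> u p = sgn (mat_apply D n z p))) \<and>
     (\<forall>i<n. mat_tapply D m u i \<in> dual_tangent_cone M y eps z i)"

lemma box_l1_minimizer_if_dual_certificate:
  assumes feas: "feasible M y eps z" and cert: "dual_certificate D m n M y eps z u"
  shows "box_l1_minimizer D m n M y eps z"
  unfolding box_l1_minimizer_def
proof (intro conjI allI impI feas)
  fix z' assume feas': "feasible M y eps z'"
  have "l1_objective D m n z = (\<Sum>p<m. u p * mat_apply D n z p)"
    unfolding l1_objective_def
    by (rule sum.cong) (use cert in \<open>auto simp: dual_certificate_def abs_sgn\<close>)
  also have "\<dots> \<le> (\<Sum>p<m. u p * mat_apply D n z p) + (\<Sum>i<n. (z' i - z i) * mat_tapply D m u i)"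
  proof -
    have "0 \<le> (z' i - z i) * mat_tapply D m u i" if "i < n" for i
      using cert that feasible_diff_mem_tangent_cone[OF feas feas']
      by (auto simp: dual_certificate_def tangent_cone_def dual_tangent_cone_def
          intro: sign_cone_dual_mult_nonneg)
    then show ?thesis by (auto intro: sum_nonneg)
  qed
  also have "\<dots> = (\<Sum>p<m. u p * mat_apply D n z' p)"
    by (simp add: mat_adjoint mat_apply_diff algebra_simps sum_subtractf)
  also have "\<dots> \<le> l1_objective D m n z'"
    unfolding l1_objective_def
  proof (rule sum_mono)
    fix p assume "p \<in> {..<m}"
    then have "\<bar>u p\<bar> \<le> 1" using cert by (simp add: dual_certificate_def)
    then have "\<bar>u p\<bar> * \<bar>mat_apply D n z' p\<bar> \<le> \<bar>mat_apply D n z' p\<bar>"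
      by (simp add: mult_left_le_one_le)
    then show "u p * mat_apply D n z' p \<le> \<bar>mat_apply D n z' p\<bar>"
      by (metis abs_ge_self abs_mult order_trans)
  qed
  finally show "l1_objective D m n z \<le> l1_objective D m n z'" .
qed

text \<open>The subdifferential of the l1 norm at \<open>D z\<close>, padded with zeros beyond \<open>m\<close>
  so that it is compact.\<close>
definition l1_subgradients :: "(nat \<Rightarrow> nat \<Rightarrow> real) \<Rightarrow> nat \<Rightarrow> nat \<Rightarrow> (nat \<Rightarrow> real) \<Rightarrow> (nat \<Rightarrow> real) set"
  where
  "l1_subgradients D m n z =
     PiE UNIV (\<lambda>p. if p < m then if mat_apply D n z p = 0 then {-1..1} else {sgn (mat_apply D n z p)}
                   else {0})"

lemma compact_l1_subgradients: "compact (l1_subgradients D m n z)"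
proof -
  have "compactin (product_topology (\<lambda>_. euclidean) UNIV) (l1_subgradients D m n z)"
    unfolding l1_subgradients_def by (simp add: compactin_PiE)
  then show ?thesis by (simp add: euclidean_product_topology)
qed

lemma l1_subgradients_segment:
  assumes "u \<in> l1_subgradients D m n z" "v \<in> l1_subgradients D m n z" "0 \<le> t" "t \<le> 1"
  shows "(\<lambda>p. u p + t * (v p - u p)) \<in> l1_subgradients D m n z"
proof -
  define S where "S p = (if p < m then if mat_apply D n z p = 0 then {-1..1}
                         else {sgn (mat_apply D n z p)} else {0::real})" for p
  have U_eq: "l1_subgradients D m n z = PiE UNIV S"
    by (simp add: l1_subgradients_def S_def[abs_def])
  have "a + t * (b - a) \<in> {-1..1}" if "a \<in> {-1..1}" "b \<in> {-1..1}" for a b :: real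
  proof -
    have "(1 - t) * a + t * b \<le> 1" "(1 - t) * (- a) + t * (- b) \<le> 1"
      by (rule convex_bound_le; use that assms(3,4) in simp)+
    then show ?thesis by (simp add: algebra_simps)
  qed
  moreover have "u p \<in> S p" "v p \<in> S p" for p
    using assms(1,2) by (auto simp: U_eq PiE_iff)
  ultimately have "u p + t * (v p - u p) \<in> S p" for p
    by (fastforce simp: S_def split: if_splits)
  then show ?thesis by (simp add: U_eq PiE_iff)
qed

lemma l1_subgradient_bounds:
  assumes "u \<in> l1_subgradients D m n z" "p < m"
  shows "\<bar>u p\<bar> \<le> 1 \<and> (mat_apply D n z p \<noteq> 0 \<longrightarrow> u p = sgn (mat_apply D n z p))"
proof -
  have "\<forall>i. u i \<in> (if i < m then if mat_apply D n z i = 0 then {-1..1}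
                                else {sgn (mat_apply D n z i)} else {0})"
    using assms(1) by (simp add: l1_subgradients_def PiE_iff)
  from spec[OF this, of p]
  have "u p \<in> (if mat_apply D n z p = 0 then {-1..1} else {sgn (mat_apply D n z p)})"
    using assms(2) by simp
  then show ?thesis by (auto simp: abs_le_iff sgn_if split: if_splits)
qed

definition l1_slope :: "(nat \<Rightarrow> nat \<Rightarrow> real) \<Rightarrow> nat \<Rightarrow> nat \<Rightarrow> (nat \<Rightarrow> real) \<Rightarrow> (nat \<Rightarrow> real) \<Rightarrow> real"
  where
  "l1_slope D m n z d = (\<Sum>p<m. if mat_apply D n z p = 0 then \<bar>mat_apply D n d p\<bar>
                                else sgn (mat_apply D n z p) * mat_apply D n d p)"

lemma eventually_l1_objective_along:
  "eventually (\<lambda>t. l1_objective D m n (\<lambda>q. z q + t * d q)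
                    = l1_objective D m n z + t * l1_slope D m n z d) (at_right 0)"
proof -
  have "eventually (\<lambda>t. \<forall>p\<in>{..<m}. \<bar>mat_apply D n z p + t * mat_apply D n d p\<bar>
          = \<bar>mat_apply D n z p\<bar> + t * (if mat_apply D n z p = 0 then \<bar>mat_apply D n d p\<bar>
                                      else sgn (mat_apply D n z p) * mat_apply D n d p)) (at_right 0)"
    by (intro eventually_ball_finite finite_lessThan ballI eventually_abs_add_scaled_at_right)
  then show ?thesis
  proof eventually_elim
    case (elim t)
    then have "l1_objective D m n (\<lambda>q. z q + t * d q)
        = (\<Sum>p<m. \<bar>mat_apply D n z p\<bar> + t * (if mat_apply D n z p = 0 then \<bar>mat_apply D n d p\<bar>
                                          else sgn (mat_apply D n z p) * mat_apply D n d p))"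
      by (simp add: l1_objective_def mat_apply_add_scaled)
    then show ?case by (simp add: l1_objective_def l1_slope_def sum.distrib sum_distrib_left)
  qed
qed

lemma l1_slope_attained:
  "\<exists>u\<in>l1_subgradients D m n z. l1_slope D m n z d = (\<Sum>p<m. u p * mat_apply D n d p)"
proof
  define u where "u p = (if p < m then if mat_apply D n z p = 0 then sgn (mat_apply D n d p)
                         else sgn (mat_apply D n z p) else 0)" for p
  show "u \<in> l1_subgradients D m n z"
    by (auto simp: u_def l1_subgradients_def PiE_iff sgn_if)
  show "l1_slope D m n z d = (\<Sum>p<m. u p * mat_apply D n d p)"
    unfolding l1_slope_def by (rule sum.cong) (auto simp: u_def sgn_mult_self_eq abs_sgn)
qed

lemma not_box_l1_minimizer_if_descent:
  assumes "finite M" "0 < eps" "feasible M y eps z"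
    and "\<And>i. d i \<in> tangent_cone M y eps z i" and "l1_slope D m n z d < 0"
  shows "\<not> box_l1_minimizer D m n M y eps z"
proof -
  have "eventually (\<lambda>t. 0 < t \<and> feasible M y eps (\<lambda>i. z i + t * d i) \<and>
      l1_objective D m n (\<lambda>q. z q + t * d q) = l1_objective D m n z + t * l1_slope D m n z d)
      (at_right 0)"
    by (intro eventually_conj eventually_at_right_less eventually_l1_objective_along
        eventually_feasible_along_tangent assms)
  then obtain t where "0 < t" and "feasible M y eps (\<lambda>i. z i + t * d i)"
    and "l1_objective D m n (\<lambda>q. z q + t * d q) = l1_objective D m n z + t * l1_slope D m n z d"
    using eventually_happens'[OF trivial_limit_at_right_real] by blast
  moreover have "t * l1_slope D m n z d < 0"
    using \<open>0 < t\<close> assms(5) by (simp add: mult_pos_neg)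
  ultimately show ?thesis
    by (fastforce simp: box_l1_minimizer_def)
qed

lemma dual_certificate_if_box_l1_minimizer:
  assumes "finite M" "0 < eps" and min: "box_l1_minimizer D m n M y eps z"
  shows "\<exists>u. dual_certificate D m n M y eps z u"
proof (rule ccontr)
  assume no_certificate: "\<nexists>u. dual_certificate D m n M y eps z u"
  let ?U = "l1_subgradients D m n z"
  have nonempty: "?U \<noteq> {}"
    by (auto simp: l1_subgradients_def PiE_eq_empty_iff)
  have outside: "\<exists>i<n. mat_tapply D m u i
      \<notin> sign_cone (i \<in> M \<and> y i - z i = eps) (i \<in> M \<and> y i - z i = - eps)" if "u \<in> ?U" for u
  proof -
    have "\<not> (\<forall>i<n. mat_tapply D m u i \<in> dual_tangent_cone M y eps z i)"
      using no_certificate l1_subgradient_bounds[OF that] unfolding dual_certificate_def by blast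
    then show ?thesis
      unfolding dual_tangent_cone_def by blast
  qed
  have "\<exists>d. (\<forall>i. d i \<in> sign_cone_dual (i \<in> M \<and> y i - z i = eps) (i \<in> M \<and> y i - z i = - eps))
      \<and> (\<forall>u\<in>?U. (\<Sum>i<n. d i * mat_tapply D m u i) < 0)"
    by (rule separating_direction[where up = "\<lambda>i. i \<in> M \<and> y i - z i = eps"
          and dn = "\<lambda>i. i \<in> M \<and> y i - z i = - eps",
          OF compact_l1_subgradients nonempty l1_subgradients_segment outside])
  then obtain d where tangent: "\<And>i. d i \<in> tangent_cone M y eps z i"
    and descent: "\<forall>u\<in>?U. (\<Sum>i<n. d i * mat_tapply D m u i) < 0"
    unfolding tangent_cone_def by blast
  obtain u where "u \<in> ?U" and "l1_slope D m n z d = (\<Sum>p<m. u p * mat_apply D n d p)"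
    using l1_slope_attained by blast
  with descent have "l1_slope D m n z d < 0"
    by (simp add: mat_adjoint)
  moreover have "feasible M y eps z"
    using min by (simp add: box_l1_minimizer_def)
  ultimately show False
    using not_box_l1_minimizer_if_descent[OF assms(1,2) _ tangent] min by blast
qed

theorem box_l1_minimizer_iff_dual_certificate:
  assumes "finite M" "0 < eps" "feasible M y eps z"
  shows "box_l1_minimizer D m n M y eps z \<longleftrightarrow> (\<exists>u. dual_certificate D m n M y eps z u)"
  using dual_certificate_if_box_l1_minimizer[OF assms(1,2)]
    box_l1_minimizer_if_dual_certificate[OF assms(3)] by blast

lemma dual_certificate_iff_conditions:
  assumes "M \<subseteq> {..<n}" "0 < eps"
  shows "dual_certificate D m n M y eps z u \<longleftrightarrow>
    (\<forall>i \<in> ({..<n} - M) \<union> (M - {i \<in> M. \<bar>y i - z i\<bar> = eps}). mat_tapply D m u i = 0) \<and>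
    (\<forall>p \<in> {p \<in> {..<m}. mat_apply D n z p \<noteq> 0}. u p = sgn (mat_apply D n z p)) \<and>
    (\<forall>p < m. \<bar>u p\<bar> \<le> 1) \<and>
    (\<forall>i \<in> {i \<in> M. y i - z i = eps}. mat_tapply D m u i \<ge> 0) \<and>
    (\<forall>i \<in> {i \<in> M. y i - z i = - eps}. mat_tapply D m u i \<le> 0)"
proof -
  have cone_iff: "v \<in> dual_tangent_cone M y eps z i \<longleftrightarrow>
      ((i \<notin> M \<or> \<bar>y i - z i\<bar> \<noteq> eps) \<longrightarrow> v = 0) \<and>
      (i \<in> M \<and> y i - z i = eps \<longrightarrow> 0 \<le> v) \<and> (i \<in> M \<and> y i - z i = - eps \<longrightarrow> v \<le> 0)"
    for i v
    using \<open>0 < eps\<close> by (auto simp: dual_tangent_cone_def sign_cone_def abs_if)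
  have cone_conditions: "(\<forall>i<n. mat_tapply D m u i \<in> dual_tangent_cone M y eps z i) \<longleftrightarrow>
      (\<forall>i \<in> ({..<n} - M) \<union> (M - {i \<in> M. \<bar>y i - z i\<bar> = eps}). mat_tapply D m u i = 0) \<and>
      (\<forall>i \<in> {i \<in> M. y i - z i = eps}. mat_tapply D m u i \<ge> 0) \<and>
      (\<forall>i \<in> {i \<in> M. y i - z i = - eps}. mat_tapply D m u i \<le> 0)"
    using \<open>M \<subseteq> {..<n}\<close> unfolding cone_iff by fastforce
  have box_conditions: "(\<forall>p<m. \<bar>u p\<bar> \<le> 1 \<and> (mat_apply D n z p \<noteq> 0 \<longrightarrow> u p = sgn (mat_apply D n z p))) \<longleftrightarrow>
      (\<forall>p \<in> {p \<in> {..<m}. mat_apply D n z p \<noteq> 0}. u p = sgn (mat_apply D n z p)) \<and>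
      (\<forall>p < m. \<bar>u p\<bar> \<le> 1)"
    by auto
  show ?thesis
    unfolding dual_certificate_def cone_conditions box_conditions by (simp only: conj_ac)
qed

theorem corollary2:
  fixes r c :: nat and M :: "nat set" and eps :: real and y :: "nat \<Rightarrow> real"
    and Z :: "nat \<Rightarrow> nat \<Rightarrow> real"
  assumes "r \<ge> 3" and "c \<ge> 3"
    and "M \<subseteq> {..<r * c}"
    and "eps > 0"
    and "feasible M y eps (vec r Z)"
  shows "is_minimizer r c M y eps (vec r Z) \<longleftrightarrow>
    (let z = vec r Z;
         n = r * c;
         Act = {i \<in> M. \<bar>y i - z i\<bar> = eps};
         Aup = {i \<in> M. y i - z i = eps};
         Adown = {i \<in> M. y i - z i = - eps};
         Abar = M - Act;
         Mbar = {..<n} - M;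
         I = {p \<in> {..<nrows r c}. Dz r c z p \<noteq> 0}
     in \<exists>u :: nat \<Rightarrow> real.
          (\<forall>i \<in> Mbar \<union> Abar. DTu r c u i = 0) \<and>
          (\<forall>p \<in> I. u p = sgn (Dz r c z p)) \<and>
          (\<forall>p < nrows r c. \<bar>u p\<bar> \<le> 1) \<and>
          (\<forall>i \<in> Aup. DTu r c u i \<ge> 0) \<and>
          (\<forall>i \<in> Adown. DTu r c u i \<le> 0))"
proof -
  have Dz: "Dz r c = mat_apply (Delta r c) (r * c)"
    by (simp add: fun_eq_iff Dz_def mat_apply_def)
  have DTu: "DTu r c = mat_tapply (Delta r c) (nrows r c)"
    by (simp add: fun_eq_iff DTu_def mat_tapply_def)
  have minimizer: "is_minimizer r c = box_l1_minimizer (Delta r c) (nrows r c) (r * c)"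
    by (simp add: fun_eq_iff is_minimizer_def box_l1_minimizer_def TV1_def l1_objective_def Dz)
  have "finite M"
    using assms(3) finite_subset by blast
  show ?thesis
    unfolding Let_def Dz DTu minimizer
      box_l1_minimizer_iff_dual_certificate[OF \<open>finite M\<close> \<open>eps > 0\<close> assms(5)]
      dual_certificate_iff_conditions[OF assms(3,4)]
    by (rule refl)
qed

end
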